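(* Let $n\ge2$. The isolated subsemigroups of $\overline{\mathcal{PI}^{\ast}}_n$ are exactly $\overline{\mathcal{PI}^{\ast}}_n$, $\mathcal{S}_n$, $\overline{\mathcal{PI}^{\ast}}_n\setminus\mathcal{S}_n$, and the maximal subgroups $G(e)$ where $e$ is an idempotent with $\mathrm{corank}(e)\le 1$.
   Context: Let $X=\{1,\dots,n\}$, $X'=\{1',\dots,n'\}$. $\overline{\mathcal{PI}^{\ast}}_n$ is the set of partitions of $X\cup X'$ each of whose blocks is a singleton (point) or a generalised line (a set meeting both $X$ and $X'$), with product $\circ$: $\alpha\circ\beta$ has as generalised lines exactly the sets $A\cup D'$ such that $A\cup B'$ is a generalised line of $\alpha$ and $B\cup D'$ is a generalised line of $\beta$ (same $B\subseteq X$), all other elements being points. Idempotents are exactly the elements whose generalised lines all have the form $E\cup E'$. For an idempotent $e$, $\mathrm{corank}(e)$ is the number of $x\in X$ such that $\{x\}$ is a block of $e$. $\mathcal{S}_n$ is the group of units (elements all of whose blocks are $\{x,\pi(x)'\}$ for a permutation $\pi$). $G(e)$ is the $\mathcal{H}$-class of $e$. A subsemigroup $T$ of a semigroup $S$ is isolated if for all $a\in S$ and $k\ge1$, $a^k\in T$ implies $a\in T$. *)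

theory Defs
  imports Main
begin

definition Xs :: "nat \<Rightarrow> (nat + nat) set" where
  "Xs n = Inl ` {1..n}"

definition Xs' :: "nat \<Rightarrow> (nat + nat) set" where
  "Xs' n = Inr ` {1..n}"

definition is_partition_of :: "'a set \<Rightarrow> 'a set set \<Rightarrow> bool" where
  "is_partition_of U P \<longleftrightarrow> (\<forall>b\<in>P. b \<noteq> {}) \<and> \<Union>P = U \<and>
     (\<forall>b\<in>P. \<forall>c\<in>P. b \<noteq> c \<longrightarrow> b \<inter> c = {})"

definition gen_line :: "nat \<Rightarrow> (nat + nat) set \<Rightarrow> bool" where
  "gen_line n b \<longleftrightarrow> b \<inter> Xs n \<noteq> {} \<and> b \<inter> Xs' n \<noteq> {}"

definition PIbar :: "nat \<Rightarrow> (nat + nat) set set set" where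
  "PIbar n = {\<alpha>. is_partition_of (Xs n \<union> Xs' n) \<alpha> \<and>
                  (\<forall>b\<in>\<alpha>. (\<exists>z. b = {z}) \<or> gen_line n b)}"

definition lineset :: "nat set \<Rightarrow> nat set \<Rightarrow> (nat + nat) set" where
  "lineset A B = Inl ` A \<union> Inr ` B"

definition lines_of :: "nat \<Rightarrow> (nat + nat) set set \<Rightarrow> (nat + nat) set set" where
  "lines_of n \<alpha> = {b\<in>\<alpha>. gen_line n b}"

definition prod_lines :: "nat \<Rightarrow> (nat + nat) set set \<Rightarrow> (nat + nat) set set \<Rightarrow> (nat + nat) set set" where
  "prod_lines n \<alpha> \<beta> = {lineset A D | A B D.
      lineset A B \<in> lines_of n \<alpha> \<and> lineset B D \<in> lines_of n \<beta>}"

definition pmult :: "nat \<Rightarrow> (nat + nat) set set \<Rightarrow> (nat + nat) set set \<Rightarrow> (nat + nat) set set" where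
  "pmult n \<alpha> \<beta> = prod_lines n \<alpha> \<beta> \<union>
     {{z} | z. z \<in> Xs n \<union> Xs' n \<and> z \<notin> \<Union>(prod_lines n \<alpha> \<beta>)}"

text \<open>Powers: ppow n a k = a^(k+1).\<close>
fun ppow :: "nat \<Rightarrow> (nat + nat) set set \<Rightarrow> nat \<Rightarrow> (nat + nat) set set" where
  "ppow n a 0 = a"
| "ppow n a (Suc k) = pmult n (ppow n a k) a"

definition Sym_n :: "nat \<Rightarrow> (nat + nat) set set set" where
  "Sym_n n = {\<alpha>. \<exists>\<pi>. bij_betw \<pi> {1..n} {1..n} \<and> \<alpha> = {{Inl x, Inr (\<pi> x)} | x. x \<in> {1..n}}}"

definition idempotent :: "nat \<Rightarrow> (nat + nat) set set \<Rightarrow> bool" where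
  "idempotent n e \<longleftrightarrow> e \<in> PIbar n \<and> pmult n e e = e"

definition corank :: "nat \<Rightarrow> (nat + nat) set set \<Rightarrow> nat" where
  "corank n e = card {x\<in>{1..n}. {Inl x} \<in> e}"

text \<open>Green's relations in PIbar n (using S^1).\<close>
definition greenR :: "nat \<Rightarrow> (nat + nat) set set \<Rightarrow> (nat + nat) set set \<Rightarrow> bool" where
  "greenR n a b \<longleftrightarrow> (a = b \<or> (\<exists>s\<in>PIbar n. a = pmult n b s)) \<and>
                    (b = a \<or> (\<exists>s\<in>PIbar n. b = pmult n a s))"

definition greenL :: "nat \<Rightarrow> (nat + nat) set set \<Rightarrow> (nat + nat) set set \<Rightarrow> bool" where
  "greenL n a b \<longleftrightarrow> (a = b \<or> (\<exists>s\<in>PIbar n. a = pmult n s b)) \<and>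
                    (b = a \<or> (\<exists>s\<in>PIbar n. b = pmult n s a))"

definition Hclass :: "nat \<Rightarrow> (nat + nat) set set \<Rightarrow> (nat + nat) set set set" where
  "Hclass n e = {a\<in>PIbar n. greenR n a e \<and> greenL n a e}"

definition subsemigroup :: "nat \<Rightarrow> (nat + nat) set set set \<Rightarrow> bool" where
  "subsemigroup n T \<longleftrightarrow> T \<noteq> {} \<and> T \<subseteq> PIbar n \<and> (\<forall>a\<in>T. \<forall>b\<in>T. pmult n a b \<in> T)"

definition isolated :: "nat \<Rightarrow> (nat + nat) set set set \<Rightarrow> bool" where
  "isolated n T \<longleftrightarrow> (\<forall>a\<in>PIbar n. \<forall>k. ppow n a k \<in> T \<longrightarrow> a \<in> T)"

end

theory Submission
  imports Defs
begin

(*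
  Reading a generalised line A \<union> B' as the pair (A, B), an element of PIbar n becomes a partial
  block bijection: a bijection between two families of pairwise disjoint nonempty subsets of
  {1..n}, with the product turned into relational composition.  The idempotents are the Id_on F
  for such families F, the H-class of Id_on F consists of the block bijections with domain and
  range F, and the units permute the singletons.

  Some power of every element is idempotent.  If an isolated subsemigroup T contains Id_on F and
  E, P are distinct sets outside all blocks of F, the two square roots of Id_on F that add the
  block maps E -> P and P -> E lie in T, and so does their product Id_on (insert E F).  Similarly,
  two points outside all blocks let one delete blocks down to the zero {}.  So if the zero lies in
  T, all idempotents except the identity do, hence all non-units, and T is PIbar n or
  PIbar n - S_n.  Otherwise every idempotent of T leaves at most one point uncovered, any two of
  them coincide, and T is the H-class of that idempotent.
*)

section \<open>Relations\<close>

lemma Id_on_relcomp: "Domain R \<subseteq> F \<Longrightarrow> Id_on F O R = R"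
  by (auto simp: Id_on_iff)

lemma relcomp_Id_on: "Range R \<subseteq> F \<Longrightarrow> R O Id_on F = R"
  by (auto simp: Id_on_iff)

lemma Id_on_relcomp_Id_on: "Id_on F O Id_on G = Id_on (F \<inter> G)"
  by (auto simp: Id_on_iff)

lemma Domain_relpow_Suc:
  fixes R :: "'a rel" shows "Domain (R ^^ Suc k) \<subseteq> Domain R"
proof -
  have "R ^^ Suc k = R O R ^^ k" by (simp add: relpow_commute)
  then show ?thesis by blast
qed

lemma Range_relpow_Suc:
  fixes R :: "'a rel" shows "Range (R ^^ Suc k) \<subseteq> Range R"
  unfolding relpow.simps(2) by blast

lemma relpow_idempotent_exists:
  fixes R :: "'a rel"
  assumes "finite (range (\<lambda>k. R ^^ Suc k))"
  shows "\<exists>k. R ^^ Suc k O R ^^ Suc k = R ^^ Suc k"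
proof -
  have "\<not> inj (\<lambda>k. R ^^ Suc k)"
    using assms finite_imageD infinite_UNIV_nat by blast
  then obtain i j where ij: "i \<noteq> j" "R ^^ Suc i = R ^^ Suc j" unfolding inj_def by blast
  obtain a p where "1 \<le> a" "1 \<le> p" and period: "R ^^ a = R ^^ (a + p)"
  proof (cases "i < j")
    case True
    show ?thesis by (rule that[of "Suc i" "j - i"]) (use True ij in auto)
  next
    case False
    show ?thesis by (rule that[of "Suc j" "i - j"]) (use False ij in auto)
  qed
  have periodic: "R ^^ (a + c * p + t) = R ^^ (a + t)" for c t
  proof (induction c)
    case (Suc c)
    have "R ^^ (a + Suc c * p + t) = R ^^ (a + p) O R ^^ (c * p + t)"
      by (simp add: relpow_add[symmetric] algebra_simps)
    also have "\<dots> = R ^^ (a + c * p + t)"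
      by (simp add: period[symmetric] relpow_add[symmetric] algebra_simps)
    finally show ?case using Suc by simp
  qed simp
  define m where "m = a * p" \<comment> \<open>a multiple of the period beyond the preperiod\<close>
  have "a \<le> m" using \<open>1 \<le> p\<close> unfolding m_def by simp
  then have "m + m = a + a * p + (m - a)" unfolding m_def by simp
  then have "R ^^ (m + m) = R ^^ (a + (m - a))" using periodic[of a "m - a"] by simp
  also have "\<dots> = R ^^ m" using \<open>a \<le> m\<close> by simp
  finally have "R ^^ m O R ^^ m = R ^^ m" by (simp add: relpow_add)
  moreover have "Suc (m - 1) = m" using \<open>1 \<le> a\<close> \<open>a \<le> m\<close> by simp
  ultimately show ?thesis by (intro exI[of _ "m - 1"]) simp
qed

section \<open>Partial block bijections\<close>

definition block_family :: "nat \<Rightarrow> nat set set \<Rightarrow> bool" where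
  "block_family n F \<longleftrightarrow>
     (\<forall>E\<in>F. E \<noteq> {} \<and> E \<subseteq> {1..n}) \<and> (\<forall>E\<in>F. \<forall>E'\<in>F. E \<noteq> E' \<longrightarrow> E \<inter> E' = {})"

definition uncovered :: "nat \<Rightarrow> nat set set \<Rightarrow> nat set" where
  "uncovered n F = {1..n} - \<Union>F"

definition singletons :: "nat \<Rightarrow> nat set set" where
  "singletons n = (\<lambda>i. {i}) ` {1..n}"

definition block_bij :: "nat \<Rightarrow> (nat set \<times> nat set) set \<Rightarrow> bool" where
  "block_bij n R \<longleftrightarrow>
     (\<forall>A B. (A, B) \<in> R \<longrightarrow> A \<noteq> {} \<and> B \<noteq> {} \<and> A \<subseteq> {1..n} \<and> B \<subseteq> {1..n}) \<and>
     (\<forall>A B A' B'. (A, B) \<in> R \<longrightarrow> (A', B') \<in> R \<longrightarrow> (A, B) \<noteq> (A', B') \<longrightarrow>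
        A \<inter> A' = {} \<and> B \<inter> B' = {})"

definition block_group :: "nat \<Rightarrow> nat set set \<Rightarrow> (nat set \<times> nat set) set set" where
  "block_group n F = {R. block_bij n R \<and> Domain R = F \<and> Range R = F}"

lemma block_familyD: "block_family n F \<Longrightarrow> E \<in> F \<Longrightarrow> E \<noteq> {} \<and> E \<subseteq> {1..n}"
  unfolding block_family_def by blast

lemma block_family_disjoint:
  "block_family n F \<Longrightarrow> E \<in> F \<Longrightarrow> E' \<in> F \<Longrightarrow> E \<noteq> E' \<Longrightarrow> E \<inter> E' = {}"
  unfolding block_family_def by blast

lemma block_bijD:
  "block_bij n R \<Longrightarrow> (A, B) \<in> R \<Longrightarrow> A \<noteq> {} \<and> B \<noteq> {} \<and> A \<subseteq> {1..n} \<and> B \<subseteq> {1..n}"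
  unfolding block_bij_def by blast

lemma block_bij_disjoint:
  "block_bij n R \<Longrightarrow> (A, B) \<in> R \<Longrightarrow> (A', B') \<in> R \<Longrightarrow> (A, B) \<noteq> (A', B') \<Longrightarrow>
    A \<inter> A' = {} \<and> B \<inter> B' = {}"
  unfolding block_bij_def by blast

lemma block_bijI:
  assumes "\<And>A B. (A, B) \<in> R \<Longrightarrow> A \<noteq> {} \<and> B \<noteq> {} \<and> A \<subseteq> {1..n} \<and> B \<subseteq> {1..n}"
    and "\<And>A B A' B'. (A, B) \<in> R \<Longrightarrow> (A', B') \<in> R \<Longrightarrow> (A, B) \<noteq> (A', B') \<Longrightarrow>
           A \<inter> A' = {} \<and> B \<inter> B' = {}"
  shows "block_bij n R"
  unfolding block_bij_def using assms by blast

lemma block_bij_right_unique: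
  assumes "block_bij n R" "(A, B) \<in> R" "(A, B') \<in> R" shows "B = B'"
proof (rule ccontr)
  assume "B \<noteq> B'"
  then have "A \<inter> A = {}" using block_bij_disjoint[OF assms] by simp
  then show False using block_bijD[OF assms(1,2)] by simp
qed

lemma block_bij_left_unique:
  assumes "block_bij n R" "(A, B) \<in> R" "(A', B) \<in> R" shows "A = A'"
proof (rule ccontr)
  assume "A \<noteq> A'"
  then have "B \<inter> B = {}" using block_bij_disjoint[OF assms] by simp
  then show False using block_bijD[OF assms(1,2)] by simp
qed

lemma block_bij_converse:
  assumes R: "block_bij n R" shows "block_bij n (R\<inverse>)"
proof (rule block_bijI)
  fix A B assume "(A, B) \<in> R\<inverse>"
  then show "A \<noteq> {} \<and> B \<noteq> {} \<and> A \<subseteq> {1..n} \<and> B \<subseteq> {1..n}"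
    using block_bijD[OF R, of B A] by auto
next
  fix A B A' B' assume "(A, B) \<in> R\<inverse>" "(A', B') \<in> R\<inverse>" "(A, B) \<noteq> (A', B')"
  then show "A \<inter> A' = {} \<and> B \<inter> B' = {}"
    using block_bij_disjoint[OF R, of B A B' A'] by auto
qed

lemma block_bij_empty: "block_bij n {}"
  unfolding block_bij_def by blast

lemma block_bij_relcomp:
  assumes R: "block_bij n R" and Q: "block_bij n Q" shows "block_bij n (R O Q)"
proof (rule block_bijI)
  fix A D assume "(A, D) \<in> R O Q"
  then obtain B where "(A, B) \<in> R" "(B, D) \<in> Q" by blast
  then show "A \<noteq> {} \<and> D \<noteq> {} \<and> A \<subseteq> {1..n} \<and> D \<subseteq> {1..n}"
    using block_bijD[OF R] block_bijD[OF Q] by blast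
next
  fix A D A' D' assume "(A, D) \<in> R O Q" "(A', D') \<in> R O Q" and ne: "(A, D) \<noteq> (A', D')"
  then obtain B B' where B: "(A, B) \<in> R" "(B, D) \<in> Q" "(A', B') \<in> R" "(B', D') \<in> Q" by blast
  have "B \<noteq> B'"
  proof
    assume "B = B'"
    then have "A = A'" "D = D'"
      using B block_bij_left_unique[OF R, of A B A'] block_bij_right_unique[OF Q, of B D D']
      by simp_all
    then show False using ne by simp
  qed
  then show "A \<inter> A' = {} \<and> D \<inter> D' = {}"
    using block_bij_disjoint[OF R B(1,3)] block_bij_disjoint[OF Q B(2,4)] by simp
qed

lemma block_bij_relpow: "block_bij n R \<Longrightarrow> block_bij n (R ^^ Suc k)"
  by (induction k) (simp_all add: block_bij_relcomp)

lemma block_bij_insert: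
  assumes R: "block_bij n R" and "A \<noteq> {}" "B \<noteq> {}" "A \<subseteq> {1..n}" "B \<subseteq> {1..n}"
    and "A \<inter> \<Union>(Domain R) = {}" "B \<inter> \<Union>(Range R) = {}"
  shows "block_bij n (insert (A, B) R)"
proof (rule block_bijI)
  fix C D assume "(C, D) \<in> insert (A, B) R"
  then consider "(C, D) = (A, B)" | "(C, D) \<in> R" by blast
  then show "C \<noteq> {} \<and> D \<noteq> {} \<and> C \<subseteq> {1..n} \<and> D \<subseteq> {1..n}"
    by cases (use assms(2-5) block_bijD[OF R, of C D] in simp_all)
next
  fix C D C' D'
  assume "(C, D) \<in> insert (A, B) R" "(C', D') \<in> insert (A, B) R" and ne: "(C, D) \<noteq> (C', D')"
  then consider "(C, D) \<in> R" "(C', D') \<in> R" | "(C, D) = (A, B)" "(C', D') \<in> R"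
    | "(C, D) \<in> R" "(C', D') = (A, B)"
    by auto
  then show "C \<inter> C' = {} \<and> D \<inter> D' = {}"
  proof cases
    case 1
    then show ?thesis using block_bij_disjoint[OF R _ _ ne] by simp
  next
    case 2
    then have "A \<inter> C' = {}" "B \<inter> D' = {}" using assms(6,7) by blast+
    then show ?thesis using 2 by simp
  next
    case 3
    then have "A \<inter> C = {}" "B \<inter> D = {}" using assms(6,7) by blast+
    then show ?thesis using 3 by blast
  qed
qed

lemma block_family_Domain:
  assumes R: "block_bij n R" shows "block_family n (Domain R)"
  unfolding block_family_def
proof (rule conjI; intro ballI impI)
  fix E assume "E \<in> Domain R"
  then show "E \<noteq> {} \<and> E \<subseteq> {1..n}" using block_bijD[OF R] by blast
next
  fix E E' assume "E \<in> Domain R" "E' \<in> Domain R" "E \<noteq> E'"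
  then show "E \<inter> E' = {}" using block_bij_disjoint[OF R] by blast
qed

lemma block_bij_Id_on_iff: "block_bij n (Id_on F) \<longleftrightarrow> block_family n F"
proof
  assume "block_bij n (Id_on F)"
  then show "block_family n F" using block_family_Domain[of n "Id_on F"] by simp
next
  assume F: "block_family n F"
  show "block_bij n (Id_on F)"
  proof (rule block_bijI)
    fix A B assume "(A, B) \<in> Id_on F"
    then show "A \<noteq> {} \<and> B \<noteq> {} \<and> A \<subseteq> {1..n} \<and> B \<subseteq> {1..n}"
      using F unfolding block_family_def by (auto simp: Id_on_iff)
  next
    fix A B A' B' assume "(A, B) \<in> Id_on F" "(A', B') \<in> Id_on F" "(A, B) \<noteq> (A', B')"
    then show "A \<inter> A' = {} \<and> B \<inter> B' = {}"
      using F unfolding block_family_def by (auto simp: Id_on_iff)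
  qed
qed

lemma block_family_Range: "block_bij n R \<Longrightarrow> block_family n (Range R)"
  using block_family_Domain[OF block_bij_converse] by simp

lemma block_family_subset: "block_family n F \<Longrightarrow> G \<subseteq> F \<Longrightarrow> block_family n G"
  unfolding block_family_def by (meson subsetD)

lemma block_family_finite: "block_family n F \<Longrightarrow> finite F"
  by (rule finite_subset[of F "Pow {1..n}"]) (auto simp: block_family_def)

lemma finite_block_bijs: "finite {R. block_bij n R}"
proof (rule finite_subset)
  show "{R. block_bij n R} \<subseteq> Pow (Pow {1..n} \<times> Pow {1..n})"
    using block_bijD[of n] by fastforce
qed simp

lemma card_Domain_block_bij:
  assumes "block_bij n R" shows "card (Domain R) = card R"
proof -
  have "inj_on fst R"
    by (rule inj_onI) (use block_bij_right_unique[OF assms] in fastforce)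
  then show ?thesis unfolding Domain_fst by (rule card_image)
qed

lemma card_Range_block_bij: "block_bij n R \<Longrightarrow> card (Range R) = card R"
  using card_Domain_block_bij[OF block_bij_converse] by simp

lemma block_bij_relcomp_converse:
  assumes "block_bij n R" shows "R O R\<inverse> = Id_on (Domain R)"
  using block_bij_left_unique[OF assms] by (auto simp: Id_on_iff)

lemma block_bij_converse_relcomp:
  assumes "block_bij n R" shows "R\<inverse> O R = Id_on (Range R)"
  using block_bij_relcomp_converse[OF block_bij_converse[OF assms]] by simp

lemma block_bij_idempotent:
  assumes R: "block_bij n R" and idem: "R O R = R" shows "R = Id_on (Domain R)"
proof -
  have "A = B" if AB: "(A, B) \<in> R" for A B
  proof -
    from AB idem obtain C where AC: "(A, C) \<in> R" and CB: "(C, B) \<in> R" by blast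
    have "C = B" using block_bij_right_unique[OF R AC AB] .
    then show ?thesis using block_bij_left_unique[OF R CB] AB by simp
  qed
  then show ?thesis by (auto simp: Id_on_iff)
qed

lemma block_bij_relpow_eq_Id_on:
  assumes R: "block_bij n R"
  shows "\<exists>k F. block_family n F \<and> R ^^ Suc k = Id_on F"
proof -
  have "range (\<lambda>k. R ^^ Suc k) \<subseteq> {R. block_bij n R}"
    using block_bij_relpow[OF R] by auto
  then have "finite (range (\<lambda>k. R ^^ Suc k))"
    using finite_block_bijs by (rule finite_subset)
  then obtain k where idem: "R ^^ Suc k O R ^^ Suc k = R ^^ Suc k"
    using relpow_idempotent_exists by blast
  have Rk: "block_bij n (R ^^ Suc k)" using block_bij_relpow[OF R] .
  show ?thesis
    using block_bij_idempotent[OF Rk idem] block_family_Domain[OF Rk] by blast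
qed

lemma block_group_block_bij: "R \<in> block_group n F \<Longrightarrow> block_bij n R"
  unfolding block_group_def by simp

lemma block_group_relcomp:
  assumes "R \<in> block_group n F" "Q \<in> block_group n F" shows "R O Q \<in> block_group n F"
proof -
  have "Domain (R O Q) = F" "Range (R O Q) = F"
    using assms unfolding block_group_def by blast+
  then show ?thesis using assms block_bij_relcomp unfolding block_group_def by simp
qed

lemma block_group_relpow: "R \<in> block_group n F \<Longrightarrow> R ^^ Suc k \<in> block_group n F"
  by (induction k) (auto intro: block_group_relcomp)

lemma Id_on_in_block_group: "block_family n F \<Longrightarrow> Id_on F \<in> block_group n F"
  unfolding block_group_def by (simp add: block_bij_Id_on_iff)

lemma block_group_relpow_eq_Id_on:
  assumes R: "R \<in> block_group n F" shows "\<exists>k. R ^^ Suc k = Id_on F"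
proof -
  obtain k G where "R ^^ Suc k = Id_on G"
    using block_bij_relpow_eq_Id_on[OF block_group_block_bij[OF R]] by blast
  moreover have "Domain (R ^^ Suc k) = F"
    using block_group_relpow[OF R] unfolding block_group_def by simp
  ultimately show ?thesis by auto
qed

lemma uncovered_antimono: "G \<subseteq> F \<Longrightarrow> uncovered n F \<subseteq> uncovered n G"
  unfolding uncovered_def by auto

lemma uncovered_notin:
  assumes "block_family n F" shows "uncovered n F \<notin> F"
proof
  assume U: "uncovered n F \<in> F"
  then obtain x where x: "x \<in> uncovered n F" using block_familyD[OF assms] by blast
  then have "x \<in> \<Union>F" using U by blast
  then show False using x unfolding uncovered_def by simp
qed

lemma block_bij_Domain_notin:
  assumes R: "block_bij n R" and "F \<subseteq> Domain R" "A \<in> Domain R" "A \<notin> F"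
  shows "A \<subseteq> uncovered n F"
proof -
  obtain B where AB: "(A, B) \<in> R" using assms(3) by blast
  have "A \<inter> E = {}" if "E \<in> F" for E
  proof -
    obtain B' where "(E, B') \<in> R" using \<open>E \<in> F\<close> assms(2) by blast
    moreover have "A \<noteq> E" using \<open>E \<in> F\<close> assms(4) by auto
    ultimately show ?thesis using block_bij_disjoint[OF R AB] by blast
  qed
  then show ?thesis using block_bijD[OF R AB] unfolding uncovered_def by auto
qed

lemma subset_uncovered_eq:
  assumes "card (uncovered n F) \<le> 1" "A \<subseteq> uncovered n F" "A \<noteq> {}"
  shows "A = uncovered n F"
proof -
  have "finite (uncovered n F)" unfolding uncovered_def by simp
  then have single: "\<forall>x\<in>uncovered n F. \<forall>y\<in>uncovered n F. x = y"
    using assms(1) by (simp add: card_le_Suc0_iff_eq)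
  obtain a where a: "a \<in> A" using assms(3) by blast
  have "uncovered n F \<subseteq> A"
  proof
    fix y assume "y \<in> uncovered n F"
    then have "y = a" using single a assms(2) by blast
    then show "y \<in> A" using a by simp
  qed
  with assms(2) show ?thesis by (rule subset_antisym)
qed

lemma block_bij_Domain_cases:
  assumes R: "block_bij n R" and card: "card (uncovered n F) \<le> 1" and F: "F \<subseteq> Domain R"
  shows "Domain R = F \<or> Domain R = insert (uncovered n F) F"
proof -
  have "A \<in> insert (uncovered n F) F" if "A \<in> Domain R" for A
  proof (cases "A \<in> F")
    case False
    have "A \<noteq> {}" using \<open>A \<in> Domain R\<close> block_bijD[OF R] by blast
    then show ?thesis
      using subset_uncovered_eq[OF card block_bij_Domain_notin[OF R F \<open>A \<in> Domain R\<close> False]] by simp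
  qed simp
  then have sub: "Domain R \<subseteq> insert (uncovered n F) F" by blast
  show ?thesis
  proof (cases "uncovered n F \<in> Domain R")
    case True
    then have "insert (uncovered n F) F \<subseteq> Domain R" using F by simp
    with sub have "Domain R = insert (uncovered n F) F" by (rule subset_antisym)
    then show ?thesis ..
  next
    case False
    then have "Domain R \<subseteq> F" using sub by blast
    then have "Domain R = F" using F by (rule subset_antisym)
    then show ?thesis ..
  qed
qed

lemma block_bij_Range_cases:
  assumes "block_bij n R" "card (uncovered n F) \<le> 1" "F \<subseteq> Range R"
  shows "Range R = F \<or> Range R = insert (uncovered n F) F"
  using block_bij_Domain_cases[OF block_bij_converse[OF assms(1)] assms(2)] assms(3) by simp

text \<open>With at most one uncovered point, a root of an element of the group of \<open>Id_on F\<close> can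
  only add the uncovered set as one more block on both sides, and then its powers would keep it.\<close>

lemma block_group_isolated:
  assumes F: "block_family n F" and card: "card (uncovered n F) \<le> 1" and R: "block_bij n R"
    and pow: "R ^^ Suc k \<in> block_group n F"
  shows "R \<in> block_group n F"
proof -
  let ?X = "uncovered n F"
  have pow_D: "Domain (R ^^ Suc k) = F" and pow_R: "Range (R ^^ Suc k) = F"
    using pow unfolding block_group_def by simp_all
  have "F \<subseteq> Domain R" using Domain_relpow_Suc[of k R] unfolding pow_D .
  then have D: "Domain R = F \<or> Domain R = insert ?X F" by (rule block_bij_Domain_cases[OF R card])
  have "F \<subseteq> Range R" using Range_relpow_Suc[of k R] unfolding pow_R .
  then have Rg: "Range R = F \<or> Range R = insert ?X F" by (rule block_bij_Range_cases[OF R card])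
  have "card (insert ?X F) \<noteq> card F"
    using block_family_finite[OF F] uncovered_notin[OF F] by simp
  moreover have "card (Domain R) = card (Range R)"
    using card_Domain_block_bij[OF R] card_Range_block_bij[OF R] by simp
  ultimately have DR: "Domain R = Range R" using D Rg by (elim disjE) simp_all
  have "Domain R \<noteq> insert ?X F"
  proof
    assume "Domain R = insert ?X F"
    then have "R \<in> block_group n (insert ?X F)" using R DR unfolding block_group_def by simp
    then have "R ^^ Suc k \<in> block_group n (insert ?X F)" by (rule block_group_relpow)
    then have "insert ?X F = F" using pow_D unfolding block_group_def by simp
    then show False using uncovered_notin[OF F] by blast
  qed
  then show ?thesis using D DR R unfolding block_group_def by simp
qed

lemma block_family_singletons: "block_family n (singletons n)"
  unfolding block_family_def singletons_def by auto

lemma uncovered_singletons: "uncovered n (singletons n) = {}"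
  unfolding uncovered_def singletons_def by auto

lemma card_singletons: "card (singletons n) = n"
  unfolding singletons_def by (simp add: card_image)

lemma block_family_eq_singletons:
  assumes F: "block_family n F" and card: "n \<le> card F"
  shows "F = singletons n"
proof -
  define pick where "pick = (\<lambda>E::nat set. SOME x. x \<in> E)"
  have pick: "pick E \<in> E" if "E \<in> F" for E
    using block_familyD[OF F that] unfolding pick_def by (simp add: some_in_eq)
  have "inj_on pick F"
  proof (rule inj_onI)
    fix E E' assume "E \<in> F" "E' \<in> F" "pick E = pick E'"
    then have "E \<inter> E' \<noteq> {}" using pick by (metis disjoint_iff)
    then show "E = E'" using block_family_disjoint[OF F \<open>E \<in> F\<close> \<open>E' \<in> F\<close>] by auto
  qed
  then have "card (pick ` F) = card F" by (rule card_image)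
  moreover have sub: "pick ` F \<subseteq> {1..n}" using pick block_familyD[OF F] by blast
  moreover have "card (pick ` F) \<le> n" using card_mono[OF _ sub] by simp
  ultimately have "card (pick ` F) = card {1..n}" using card by simp
  with sub have img: "pick ` F = {1..n}" by (simp add: card_subset_eq)
  have single: "E = {pick E}" if E: "E \<in> F" for E
  proof
    show "E \<subseteq> {pick E}"
    proof
      fix y assume "y \<in> E"
      then have "y \<in> pick ` F" using block_familyD[OF F E] img by auto
      then obtain E' where E': "E' \<in> F" "y = pick E'" by blast
      then have "E = E'"
        using block_family_disjoint[OF F E] pick \<open>y \<in> E\<close> by blast
      then show "y \<in> {pick E}" using E' by simp
    qed
  qed (use pick E in simp)
  have "F = (\<lambda>E. {pick E}) ` F" using single by auto
  also have "\<dots> = singletons n" unfolding singletons_def img[symmetric] image_image ..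
  finally show ?thesis .
qed

lemma block_group_singletons_relcompD:
  assumes R: "block_bij n R" and RQ: "R O Q \<in> block_group n (singletons n)"
  shows "R \<in> block_group n (singletons n)"
proof -
  have sub: "singletons n \<subseteq> Domain R" using RQ unfolding block_group_def by blast
  have "Domain R \<subseteq> singletons n"
  proof
    fix A assume A: "A \<in> Domain R"
    show "A \<in> singletons n"
    proof (rule ccontr)
      assume "A \<notin> singletons n"
      then have "A \<subseteq> {}"
        using block_bij_Domain_notin[OF R sub A] uncovered_singletons by simp
      then show False using A block_bijD[OF R] by blast
    qed
  qed
  with sub have D: "Domain R = singletons n" by simp
  then have "n \<le> card (Range R)"
    using card_Domain_block_bij[OF R] card_Range_block_bij[OF R] card_singletons by simp
  then have "Range R = singletons n"
    by (rule block_family_eq_singletons[OF block_family_Range[OF R]])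
  then show ?thesis using D R unfolding block_group_def by simp
qed

section \<open>Isolated subsemigroups of partial block bijections\<close>

definition swap_blocks :: "nat set set \<Rightarrow> nat set \<Rightarrow> nat set \<Rightarrow> (nat set \<times> nat set) set" where
  "swap_blocks F A B = insert (A, B) (insert (B, A) (Id_on (F - {A, B})))"

lemma block_bij_swap_blocks:
  assumes F: "block_family n F" and "A \<in> F" "B \<in> F" "A \<noteq> B"
  shows "block_bij n (swap_blocks F A B)"
proof -
  have AB: "A \<noteq> {}" "A \<subseteq> {1..n}" "B \<noteq> {}" "B \<subseteq> {1..n}"
    using block_familyD[OF F] assms(2,3) by auto
  have disj: "E \<inter> \<Union>(F - {E}) = {}" if "E \<in> F" for E
    using block_family_disjoint[OF F that] by blast
  have "block_bij n (Id_on (F - {A, B}))"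
    using block_family_subset[OF F] block_bij_Id_on_iff by blast
  then have "block_bij n (insert (B, A) (Id_on (F - {A, B})))"
    by (rule block_bij_insert) (use AB disj[OF \<open>A \<in> F\<close>] disj[OF \<open>B \<in> F\<close>] in auto)
  then show ?thesis unfolding swap_blocks_def
    by (rule block_bij_insert)
      (use AB assms(4) disj[OF \<open>A \<in> F\<close>] disj[OF \<open>B \<in> F\<close>]
        block_family_disjoint[OF F assms(2,3,4)] in auto)
qed

lemma swap_blocks_square: "A \<in> F \<Longrightarrow> B \<in> F \<Longrightarrow> swap_blocks F A B O swap_blocks F A B = Id_on F"
  unfolding swap_blocks_def by (auto simp: Id_on_iff)

lemma Id_on_swap_blocks_Id_on:
  "G \<subseteq> F \<Longrightarrow> B \<notin> G \<Longrightarrow> Id_on G O swap_blocks F A B O Id_on G = Id_on (G - {A})"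
  unfolding swap_blocks_def by (auto simp: Id_on_iff)

locale isolated_block_subsemigroup =
  fixes n :: nat and T :: "(nat set \<times> nat set) set set"
  assumes two_le_n: "2 \<le> n"
    and block_bij_mem: "R \<in> T \<Longrightarrow> block_bij n R"
    and relcomp_mem: "R \<in> T \<Longrightarrow> Q \<in> T \<Longrightarrow> R O Q \<in> T"
    and root_mem: "block_bij n R \<Longrightarrow> R ^^ Suc k \<in> T \<Longrightarrow> R \<in> T"
begin

lemma square_root_mem: "block_bij n R \<Longrightarrow> R O R \<in> T \<Longrightarrow> R \<in> T"
  using root_mem[of R 1] by simp

lemma relpow_mem: "R \<in> T \<Longrightarrow> R ^^ Suc k \<in> T"
  by (induction k) (simp_all add: relcomp_mem)

text \<open>Both \<open>Id_on F\<close> plus a block map \<open>E \<mapsto> P\<close> and \<open>Id_on F\<close> plus \<open>P \<mapsto> E\<close> square to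
  \<open>Id_on F\<close>, while their product is \<open>Id_on (insert E F)\<close>.\<close>

lemma Id_on_insert_mem:
  assumes F: "block_family n F" and I: "Id_on F \<in> T"
    and E: "E \<noteq> {}" "E \<subseteq> {1..n}" "E \<inter> \<Union>F = {}"
    and P: "P \<noteq> {}" "P \<subseteq> {1..n}" "P \<inter> \<Union>F = {}" and "P \<noteq> E"
  shows "Id_on (insert E F) \<in> T"
proof -
  have "E \<notin> F" "P \<notin> F" using E(1,3) P(1,3) by auto
  let ?a = "insert (E, P) (Id_on F)" and ?b = "insert (P, E) (Id_on F)"
  have IF: "block_bij n (Id_on F)" using F block_bij_Id_on_iff by blast
  have "block_bij n ?a" by (rule block_bij_insert[OF IF]) (use E P in simp_all)
  moreover have "?a O ?a = Id_on F"
    using \<open>E \<notin> F\<close> \<open>P \<notin> F\<close> \<open>P \<noteq> E\<close> by (auto simp: Id_on_iff)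
  ultimately have a: "?a \<in> T" using square_root_mem I by simp
  have "block_bij n ?b" by (rule block_bij_insert[OF IF]) (use E P in simp_all)
  moreover have "?b O ?b = Id_on F"
    using \<open>E \<notin> F\<close> \<open>P \<notin> F\<close> \<open>P \<noteq> E\<close> by (auto simp: Id_on_iff)
  ultimately have b: "?b \<in> T" using square_root_mem I by simp
  have "?a O ?b = Id_on (insert E F)"
    using \<open>E \<notin> F\<close> \<open>P \<notin> F\<close> \<open>P \<noteq> E\<close> by (auto simp: Id_on_iff)
  then show ?thesis using relcomp_mem[OF a b] by simp
qed

lemma Id_on_remove_mem:
  assumes F: "block_family n F" and I: "Id_on F \<in> T"
    and x: "x \<in> uncovered n F" and y: "y \<in> uncovered n F" and "x \<noteq> y" and E: "E \<in> F"
  shows "Id_on (F - {E}) \<in> T"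
proof -
  have x': "{x} \<subseteq> {1..n}" "{x} \<inter> \<Union>F = {}" using x unfolding uncovered_def by auto
  have y': "{y} \<subseteq> {1..n}" "{y} \<inter> \<Union>F = {}" using y unfolding uncovered_def by auto
  have "{x} \<notin> F" "x \<notin> E" using x'(2) E by auto
  have Fx: "block_family n (insert {x} F)"
    using F x'(1,2) unfolding block_family_def by auto
  have "Id_on (insert {x} F) \<in> T"
    by (rule Id_on_insert_mem[OF F I _ x' _ y']) (use \<open>x \<noteq> y\<close> in auto)
  txt \<open>Swapping \<open>E\<close> with the new block \<open>{x}\<close> and cutting back to \<open>F\<close> deletes \<open>E\<close>.\<close>
  moreover have "E \<noteq> {x}" using \<open>x \<notin> E\<close> by auto
  then have sw: "block_bij n (swap_blocks (insert {x} F) E {x})"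
    using block_bij_swap_blocks[OF Fx] E by simp
  ultimately have "swap_blocks (insert {x} F) E {x} \<in> T"
    using square_root_mem swap_blocks_square[of E "insert {x} F" "{x}"] E by simp
  then have "Id_on F O swap_blocks (insert {x} F) E {x} O Id_on F \<in> T"
    using relcomp_mem I by blast
  then show ?thesis using Id_on_swap_blocks_Id_on[OF subset_insertI \<open>{x} \<notin> F\<close>] by simp
qed

lemma empty_mem_if_two_uncovered:
  assumes "block_family n F" "Id_on F \<in> T" "x \<in> uncovered n F" "y \<in> uncovered n F" "x \<noteq> y"
  shows "{} \<in> T"
  using block_family_finite[OF assms(1)] assms
proof (induction F rule: finite_induct)
  case (insert E F)
  have "Id_on F \<in> T"
    using Id_on_remove_mem[OF insert.prems(1-5) insertI1] insert.hyps(2) by simp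
  moreover have "uncovered n (insert E F) \<subseteq> uncovered n F" by (rule uncovered_antimono) blast
  ultimately show ?case
    using insert.IH block_family_subset[OF insert.prems(1)] insert.prems(3-5) by blast
qed simp

lemma Id_on_mem_if_uncovered:
  assumes "{} \<in> T" "block_family n F" "x \<in> uncovered n F"
  shows "Id_on F \<in> T"
  using block_family_finite[OF assms(2)] assms(2,3)
proof (induction F rule: finite_induct)
  case (insert E F)
  have F: "block_family n F" using block_family_subset[OF insert.prems(1)] by blast
  have x: "x \<in> uncovered n F" using uncovered_antimono[of F "insert E F"] insert.prems(2) by blast
  have E: "E \<noteq> {}" "E \<subseteq> {1..n}" using block_familyD[OF insert.prems(1)] by auto
  have EF: "E \<inter> \<Union>F = {}"
    using block_family_disjoint[OF insert.prems(1), of E] insert.hyps(2) by blast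
  have "{x} \<subseteq> {1..n}" "{x} \<inter> \<Union>F = {}" "{x} \<noteq> E"
    using x insert.prems(2) unfolding uncovered_def by auto
  then show ?case by (intro Id_on_insert_mem[OF F insert.IH[OF F x] E EF]) simp_all
qed (use assms(1) in simp)

lemma Id_on_mem_if_empty_mem:
  assumes "{} \<in> T" and F: "block_family n F" and "F \<noteq> singletons n"
  shows "Id_on F \<in> T"
proof (cases "uncovered n F = {}")
  case False
  then show ?thesis using Id_on_mem_if_uncovered[OF assms(1) F] by blast
next
  case True
  txt \<open>All of \<open>{1..n}\<close> is covered, so some block \<open>E\<close> has a second point \<open>y\<close>;
    the map \<open>E \<mapsto> {y}\<close> gives a root of \<open>Id_on (F - {E})\<close>.\<close>
  have "\<exists>E\<in>F. \<nexists>i. E = {i}"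
  proof (rule ccontr)
    assume "\<not> ?thesis"
    then have single: "\<exists>i. E = {i}" if "E \<in> F" for E using that by blast
    have "F \<subseteq> singletons n"
      using single block_familyD[OF F] unfolding singletons_def by fastforce
    moreover have "singletons n \<subseteq> F"
    proof
      fix S assume "S \<in> singletons n"
      then obtain i where i: "i \<in> {1..n}" "S = {i}" unfolding singletons_def by auto
      then obtain E where "E \<in> F" "i \<in> E" using True unfolding uncovered_def by auto
      then show "S \<in> F" using single i by force
    qed
    ultimately show False using assms(3) by simp
  qed
  then obtain E where E: "E \<in> F" "\<nexists>i. E = {i}" by blast
  obtain y where y: "y \<in> E" using block_familyD[OF F E(1)] by blast
  let ?F = "F - {E}"
  have F': "block_family n ?F" using block_family_subset[OF F] by blast
  have EF: "E \<inter> \<Union>?F = {}" using block_family_disjoint[OF F E(1)] by blast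
  have Ene: "E \<noteq> {}" "E \<subseteq> {1..n}" using block_familyD[OF F E(1)] by auto
  have y': "y \<in> uncovered n ?F" using y EF Ene(2) unfolding uncovered_def by blast
  have "{y} \<subseteq> {1..n}" "{y} \<inter> \<Union>?F = {}" "{y} \<noteq> E"
    using y' E(2) unfolding uncovered_def by auto
  then have "Id_on (insert E ?F) \<in> T"
    by (intro Id_on_insert_mem[OF F' Id_on_mem_if_uncovered[OF assms(1) F' y'] Ene EF]) simp_all
  moreover have "insert E ?F = F" using E(1) by blast
  ultimately show ?thesis by simp
qed

lemma block_group_subset:
  assumes "R \<in> T" "R \<in> block_group n F" shows "block_group n F \<subseteq> T"
proof
  fix Q assume Q: "Q \<in> block_group n F"
  obtain k where "R ^^ Suc k = Id_on F" using block_group_relpow_eq_Id_on[OF assms(2)] by blast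
  then have "Id_on F \<in> T" using relpow_mem[OF assms(1)] by metis
  moreover obtain j where "Q ^^ Suc j = Id_on F" using block_group_relpow_eq_Id_on[OF Q] by blast
  ultimately show "Q \<in> T" using root_mem[OF block_group_block_bij[OF Q]] by metis
qed

lemma nonunit_mem:
  assumes "{} \<in> T" and R: "block_bij n R" and "R \<notin> block_group n (singletons n)"
  shows "R \<in> T"
proof -
  obtain k F where F: "block_family n F" and Rk: "R ^^ Suc k = Id_on F"
    using block_bij_relpow_eq_Id_on[OF R] by blast
  have "F \<noteq> singletons n"
  proof
    assume "F = singletons n"
    then have "R ^^ Suc k \<in> block_group n (singletons n)"
      using Rk Id_on_in_block_group[OF block_family_singletons] by simp
    then have "R \<in> block_group n (singletons n)"
      using block_group_isolated[OF block_family_singletons _ R] uncovered_singletons by simp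
    then show False using assms(3) by simp
  qed
  then have "R ^^ Suc k \<in> T" using Id_on_mem_if_empty_mem[OF assms(1) F] Rk by simp
  then show ?thesis using root_mem[OF R] by blast
qed

text \<open>Without the zero, an idempotent \<open>Id_on G\<close> of \<open>T\<close> has at most one uncovered point. So
  if \<open>G \<subset> F\<close> with \<open>Id_on F \<in> T\<close>, a block \<open>E \<in> F - G\<close> and some \<open>G1 \<in> G\<close> exist, and cutting the
  swap of \<open>G1\<close> and \<open>E\<close> back to \<open>G\<close> leaves \<open>Id_on (G - {G1})\<close> with two uncovered points.\<close>

lemma Id_on_mem_subset_eq:
  assumes "{} \<notin> T" and F: "block_family n F" and IF: "Id_on F \<in> T" and IG: "Id_on G \<in> T"
    and "G \<subseteq> F"
  shows "G = F"
proof (rule ccontr)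
  assume "G \<noteq> F"
  then obtain E where E: "E \<in> F" "E \<notin> G" using \<open>G \<subseteq> F\<close> by blast
  have G: "block_family n G" using block_family_subset[OF F \<open>G \<subseteq> F\<close>] .
  have one: "x = y" if "x \<in> uncovered n G" "y \<in> uncovered n G" for x y
    using empty_mem_if_two_uncovered[OF G IG that] assms(1) by blast
  have "G \<noteq> {}"
  proof
    assume "G = {}"
    then have "1 \<in> uncovered n G" "2 \<in> uncovered n G" using two_le_n unfolding uncovered_def by auto
    then show False using one by fastforce
  qed
  then obtain G1 where G1: "G1 \<in> G" by blast
  have "G1 \<in> F" "G1 \<noteq> E" using G1 E \<open>G \<subseteq> F\<close> by auto
  have "block_bij n (swap_blocks F G1 E)"
    using block_bij_swap_blocks[OF F \<open>G1 \<in> F\<close> E(1) \<open>G1 \<noteq> E\<close>] .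
  then have "swap_blocks F G1 E \<in> T"
    using square_root_mem swap_blocks_square[OF \<open>G1 \<in> F\<close> E(1)] IF by simp
  then have "Id_on G O swap_blocks F G1 E O Id_on G \<in> T" using relcomp_mem IG by blast
  then have I: "Id_on (G - {G1}) \<in> T" using Id_on_swap_blocks_Id_on[OF \<open>G \<subseteq> F\<close> E(2)] by simp
  obtain x where x: "x \<in> E" using block_familyD[OF F E(1)] by blast
  obtain y where y: "y \<in> G1" using block_familyD[OF G G1] by blast
  have "E \<inter> \<Union>G = {}" "G1 \<inter> \<Union>(G - {G1}) = {}"
    using block_family_disjoint[OF F E(1)] block_family_disjoint[OF G G1] E(2) \<open>G \<subseteq> F\<close> by blast+
  then have "x \<in> uncovered n (G - {G1})" "y \<in> uncovered n (G - {G1})" "x \<noteq> y"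
    using x y G1 block_familyD[OF F E(1)] block_familyD[OF G G1] unfolding uncovered_def by blast+
  then show False
    using empty_mem_if_two_uncovered[OF block_family_subset[OF G] I] assms(1) by blast
qed

lemma Id_on_mem_unique:
  assumes "{} \<notin> T" "block_family n F" "block_family n G" "Id_on F \<in> T" "Id_on G \<in> T"
  shows "F = G"
proof -
  have "Id_on (F \<inter> G) \<in> T" using relcomp_mem[OF assms(4,5)] Id_on_relcomp_Id_on by metis
  then have "F \<inter> G = F" "F \<inter> G = G"
    using Id_on_mem_subset_eq[OF assms(1)] assms(2-5) by blast+
  then show ?thesis by simp
qed

lemma eq_if_empty_mem:
  assumes "{} \<in> T"
  shows "T = {R. block_bij n R} \<or> T = {R. block_bij n R} - block_group n (singletons n)"
proof -
  have nonunits: "{R. block_bij n R} - block_group n (singletons n) \<subseteq> T"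
    using nonunit_mem[OF assms] by blast
  have "T \<subseteq> {R. block_bij n R}" using block_bij_mem by blast
  show ?thesis
  proof (cases "T \<inter> block_group n (singletons n) = {}")
    case True
    then show ?thesis using nonunits \<open>T \<subseteq> _\<close> by blast
  next
    case False
    then have "block_group n (singletons n) \<subseteq> T" using block_group_subset by blast
    then show ?thesis using nonunits \<open>T \<subseteq> _\<close> by blast
  qed
qed

lemma eq_block_group_if_empty_notin:
  assumes "{} \<notin> T" "T \<noteq> {}"
  shows "\<exists>F. block_family n F \<and> card (uncovered n F) \<le> 1 \<and> T = block_group n F"
proof -
  obtain R where R: "R \<in> T" using assms(2) by blast
  obtain k F where F: "block_family n F" and Rk: "R ^^ Suc k = Id_on F"
    using block_bij_relpow_eq_Id_on[OF block_bij_mem[OF R]] by blast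
  have IF: "Id_on F \<in> T" using relpow_mem[OF R] Rk by metis
  have "\<forall>x\<in>uncovered n F. \<forall>y\<in>uncovered n F. x = y"
    using empty_mem_if_two_uncovered[OF F IF] assms(1) by blast
  then have card: "card (uncovered n F) \<le> 1"
    using card_le_Suc0_iff_eq[of "uncovered n F"] unfolding uncovered_def by simp
  have "T \<subseteq> block_group n F"
  proof
    fix Q assume Q: "Q \<in> T"
    obtain j G where G: "block_family n G" and Qj: "Q ^^ Suc j = Id_on G"
      using block_bij_relpow_eq_Id_on[OF block_bij_mem[OF Q]] by blast
    have "G = F" using Id_on_mem_unique[OF assms(1) G F _ IF] relpow_mem[OF Q] Qj by metis
    then have "Q ^^ Suc j \<in> block_group n F" using Qj Id_on_in_block_group[OF F] by simp
    then show "Q \<in> block_group n F" by (rule block_group_isolated[OF F card block_bij_mem[OF Q]])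
  qed
  moreover have "block_group n F \<subseteq> T" by (rule block_group_subset[OF IF Id_on_in_block_group[OF F]])
  ultimately show ?thesis using F card by blast
qed

end

definition block_subsemigroup :: "nat \<Rightarrow> (nat set \<times> nat set) set set \<Rightarrow> bool" where
  "block_subsemigroup n T \<longleftrightarrow> T \<noteq> {} \<and> T \<subseteq> {R. block_bij n R} \<and> (\<forall>R\<in>T. \<forall>Q\<in>T. R O Q \<in> T)"

definition block_isolated :: "nat \<Rightarrow> (nat set \<times> nat set) set set \<Rightarrow> bool" where
  "block_isolated n T \<longleftrightarrow> (\<forall>R k. block_bij n R \<longrightarrow> R ^^ Suc k \<in> T \<longrightarrow> R \<in> T)"

lemma isolated_block_subsemigroup_block_group:
  assumes "block_family n F" "card (uncovered n F) \<le> 1"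
  shows "block_subsemigroup n (block_group n F) \<and> block_isolated n (block_group n F)"
  unfolding block_subsemigroup_def block_isolated_def
  using Id_on_in_block_group[OF assms(1)] block_group_block_bij block_group_relcomp
    block_group_isolated[OF assms]
  by blast

lemma isolated_block_subsemigroup_nonunits:
  assumes "1 \<le> n"
  defines "N \<equiv> {R. block_bij n R} - block_group n (singletons n)"
  shows "block_subsemigroup n N \<and> block_isolated n N"
proof -
  have "{} \<in> N"
    using assms block_bij_empty unfolding N_def block_group_def singletons_def by auto
  moreover have "R O Q \<in> N" if "R \<in> N" "Q \<in> N" for R Q
    using that block_bij_relcomp block_group_singletons_relcompD unfolding N_def by blast
  moreover have "R \<in> N" if "block_bij n R" "R ^^ Suc k \<in> N" for R k
    using that block_group_relpow unfolding N_def by blast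
  ultimately show ?thesis
    unfolding block_subsemigroup_def block_isolated_def N_def by blast
qed

theorem isolated_block_subsemigroup_iff:
  assumes "2 \<le> n"
  shows "block_subsemigroup n T \<and> block_isolated n T \<longleftrightarrow>
    T = {R. block_bij n R} \<or> T = block_group n (singletons n) \<or>
    T = {R. block_bij n R} - block_group n (singletons n) \<or>
    (\<exists>F. block_family n F \<and> card (uncovered n F) \<le> 1 \<and> T = block_group n F)"
proof
  assume "block_subsemigroup n T \<and> block_isolated n T"
  then interpret isolated_block_subsemigroup n T
    using assms unfolding block_subsemigroup_def block_isolated_def by unfold_locales blast+
  show "T = {R. block_bij n R} \<or> T = block_group n (singletons n) \<or>
    T = {R. block_bij n R} - block_group n (singletons n) \<or>
    (\<exists>F. block_family n F \<and> card (uncovered n F) \<le> 1 \<and> T = block_group n F)"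
    using eq_if_empty_mem eq_block_group_if_empty_notin \<open>block_subsemigroup n T \<and> _\<close>
    unfolding block_subsemigroup_def by blast
next
  have all: "block_subsemigroup n {R. block_bij n R} \<and> block_isolated n {R. block_bij n R}"
    unfolding block_subsemigroup_def block_isolated_def
    using block_bij_empty block_bij_relcomp by auto
  have "card (uncovered n (singletons n)) \<le> 1" by (simp add: uncovered_singletons)
  then show "T = {R. block_bij n R} \<or> T = block_group n (singletons n) \<or>
    T = {R. block_bij n R} - block_group n (singletons n) \<or>
    (\<exists>F. block_family n F \<and> card (uncovered n F) \<le> 1 \<and> T = block_group n F) \<Longrightarrow>
    block_subsemigroup n T \<and> block_isolated n T"
    using all isolated_block_subsemigroup_block_group[OF block_family_singletons]
      isolated_block_subsemigroup_nonunits assms isolated_block_subsemigroup_block_group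
    by auto
qed

section \<open>Partial block bijections as elements of PIbar\<close>

lemma lineset_simps[simp]: "Inl x \<in> lineset A B \<longleftrightarrow> x \<in> A" "Inr x \<in> lineset A B \<longleftrightarrow> x \<in> B"
  by (auto simp: lineset_def)

lemma lineset_eq_iff: "lineset A B = lineset C D \<longleftrightarrow> A = C \<and> B = D"
proof
  assume eq: "lineset A B = lineset C D"
  have "A = C" by (rule set_eqI) (metis lineset_simps(1) eq)
  moreover have "B = D" by (rule set_eqI) (metis lineset_simps(2) eq)
  ultimately show "A = C \<and> B = D" by simp
qed simp

lemma lineset_Inl_Inr: "b = lineset {x. Inl x \<in> b} {x. Inr x \<in> b}"
proof (rule set_eqI)
  fix z show "z \<in> b \<longleftrightarrow> z \<in> lineset {x. Inl x \<in> b} {x. Inr x \<in> b}" by (cases z) simp_all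
qed

lemma lineset_Int: "lineset A B \<inter> lineset C D = lineset (A \<inter> C) (B \<inter> D)"
  by (auto simp: lineset_def)

lemma lineset_empty: "lineset {} {} = {}"
  by (simp add: lineset_def)

lemma lineset_ne: "A \<noteq> {} \<Longrightarrow> lineset A B \<noteq> {}"
  by (auto simp: lineset_def)

lemma Xs_simps[simp]: "Inl x \<in> Xs n \<longleftrightarrow> x \<in> {1..n}" "Inr x \<notin> Xs n"
  "Inr x \<in> Xs' n \<longleftrightarrow> x \<in> {1..n}" "Inl x \<notin> Xs' n"
  by (auto simp: Xs_def Xs'_def)

lemma gen_line_lineset: "gen_line n (lineset A B) \<longleftrightarrow> A \<inter> {1..n} \<noteq> {} \<and> B \<inter> {1..n} \<noteq> {}"
proof -
  have 1: "lineset A B \<inter> Xs n = Inl ` (A \<inter> {1..n})" by (auto simp: lineset_def Xs_def)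
  have 2: "lineset A B \<inter> Xs' n = Inr ` (B \<inter> {1..n})" by (auto simp: lineset_def Xs'_def)
  show ?thesis unfolding gen_line_def 1 2 by simp
qed

lemma not_gen_line_singleton: "\<not> gen_line n {z}"
  unfolding gen_line_def by (cases z) auto

lemma lineset_subset_iff: "lineset A B \<subseteq> Xs n \<union> Xs' n \<longleftrightarrow> A \<subseteq> {1..n} \<and> B \<subseteq> {1..n}"
proof
  assume sub: "lineset A B \<subseteq> Xs n \<union> Xs' n"
  have "x \<in> {1..n}" if "x \<in> A" for x
    using subsetD[OF sub, of "Inl x"] that by simp
  moreover have "y \<in> {1..n}" if "y \<in> B" for y
    using subsetD[OF sub, of "Inr y"] that by simp
  ultimately show "A \<subseteq> {1..n} \<and> B \<subseteq> {1..n}" by blast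
next
  assume "A \<subseteq> {1..n} \<and> B \<subseteq> {1..n}"
  then show "lineset A B \<subseteq> Xs n \<union> Xs' n" by (auto simp: lineset_def)
qed

definition line_rel :: "nat \<Rightarrow> (nat + nat) set set \<Rightarrow> (nat set \<times> nat set) set" where
  "line_rel n \<alpha> = {(A, B). lineset A B \<in> lines_of n \<alpha>}"

definition partition_of :: "nat \<Rightarrow> (nat set \<times> nat set) set \<Rightarrow> (nat + nat) set set" where
  "partition_of n R = (\<lambda>(A, B). lineset A B) ` R \<union>
     {{z} | z. z \<in> Xs n \<union> Xs' n \<and> z \<notin> \<Union>((\<lambda>(A, B). lineset A B) ` R)}"

lemma partition_of_cases:
  assumes "b \<in> partition_of n R"
  obtains (line) A B where "(A, B) \<in> R" "b = lineset A B"
  | (point) z where "b = {z}" "z \<in> Xs n \<union> Xs' n" "\<And>A B. (A, B) \<in> R \<Longrightarrow> z \<notin> lineset A B"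
proof -
  from assms consider "b \<in> (\<lambda>(A, B). lineset A B) ` R"
    | "b \<in> {{z} | z. z \<in> Xs n \<union> Xs' n \<and> z \<notin> \<Union>((\<lambda>(A, B). lineset A B) ` R)}"
    unfolding partition_of_def by blast
  then show thesis
  proof cases
    case 1
    then show ?thesis using line by auto
  next
    case 2
    then show ?thesis using point by blast
  qed
qed

lemma lineset_in_partition_of: "(A, B) \<in> R \<Longrightarrow> lineset A B \<in> partition_of n R"
  unfolding partition_of_def by force

lemma singleton_in_partition_of:
  "z \<in> Xs n \<union> Xs' n \<Longrightarrow> (\<And>A B. (A, B) \<in> R \<Longrightarrow> z \<notin> lineset A B) \<Longrightarrow> {z} \<in> partition_of n R"
  unfolding partition_of_def by auto

lemma mem_line_rel_iff: "(A, B) \<in> line_rel n \<alpha> \<longleftrightarrow> lineset A B \<in> \<alpha> \<and> gen_line n (lineset A B)"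
  by (simp add: line_rel_def lines_of_def)

lemma PIbar_Union: "\<alpha> \<in> PIbar n \<Longrightarrow> \<Union>\<alpha> = Xs n \<union> Xs' n"
  unfolding PIbar_def is_partition_of_def by blast

lemma PIbar_disjoint: "\<alpha> \<in> PIbar n \<Longrightarrow> b \<in> \<alpha> \<Longrightarrow> c \<in> \<alpha> \<Longrightarrow> b \<noteq> c \<Longrightarrow> b \<inter> c = {}"
  unfolding PIbar_def is_partition_of_def by blast

lemma PIbar_block: "\<alpha> \<in> PIbar n \<Longrightarrow> b \<in> \<alpha> \<Longrightarrow> (\<exists>z. b = {z}) \<or> gen_line n b"
  unfolding PIbar_def by blast

lemma block_bij_line_rel: assumes a: "\<alpha> \<in> PIbar n" shows "block_bij n (line_rel n \<alpha>)"
proof (rule block_bijI)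
  fix A B assume "(A, B) \<in> line_rel n \<alpha>"
  then have ab: "lineset A B \<in> \<alpha>" "gen_line n (lineset A B)" unfolding mem_line_rel_iff by simp_all
  have "lineset A B \<subseteq> \<Union>\<alpha>" using ab(1) by (rule Union_upper)
  then have "lineset A B \<subseteq> Xs n \<union> Xs' n" using PIbar_Union[OF a] by simp
  then have s: "A \<subseteq> {1..n} \<and> B \<subseteq> {1..n}" unfolding lineset_subset_iff .
  have g: "A \<inter> {1..n} \<noteq> {} \<and> B \<inter> {1..n} \<noteq> {}" using ab(2) unfolding gen_line_lineset .
  show "A \<noteq> {} \<and> B \<noteq> {} \<and> A \<subseteq> {1..n} \<and> B \<subseteq> {1..n}" using s g by auto
next
  fix A B A' B'
  assume l: "(A, B) \<in> line_rel n \<alpha>" "(A', B') \<in> line_rel n \<alpha>" and ne: "(A, B) \<noteq> (A', B')"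
  have m: "lineset A B \<in> \<alpha>" "lineset A' B' \<in> \<alpha>" using l unfolding mem_line_rel_iff by simp_all
  have "lineset A B \<noteq> lineset A' B'" using ne unfolding lineset_eq_iff by simp
  then have "lineset A B \<inter> lineset A' B' = {}" using PIbar_disjoint[OF a m] by simp
  then have "lineset (A \<inter> A') (B \<inter> B') = lineset {} {}" unfolding lineset_Int lineset_empty .
  then show "A \<inter> A' = {} \<and> B \<inter> B' = {}" unfolding lineset_eq_iff .
qed

lemma partition_of_line_rel_subset:
  assumes \<alpha>: "\<alpha> \<in> PIbar n" shows "partition_of n (line_rel n \<alpha>) \<subseteq> \<alpha>"
proof
  fix b assume "b \<in> partition_of n (line_rel n \<alpha>)"
  then show "b \<in> \<alpha>"
  proof (cases rule: partition_of_cases)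
    case (line A B)
    then show ?thesis unfolding mem_line_rel_iff by simp
  next
    case (point z)
    have "z \<in> \<Union>\<alpha>" using point(2) PIbar_Union[OF \<alpha>] by simp
    then obtain c where c: "c \<in> \<alpha>" "z \<in> c" by blast
    show ?thesis
    proof (cases "gen_line n c")
      case True
      let ?l = "{x. Inl x \<in> c}" and ?r = "{x. Inr x \<in> c}"
      have "c = lineset ?l ?r" by (rule lineset_Inl_Inr)
      moreover have "(?l, ?r) \<in> line_rel n \<alpha>"
        unfolding mem_line_rel_iff \<open>c = lineset ?l ?r\<close>[symmetric] using c(1) True by simp
      ultimately show ?thesis using point(3) c(2) by auto
    next
      case False
      then obtain w where "c = {w}" using PIbar_block[OF \<alpha> c(1)] by blast
      then show ?thesis using c point(1) by simp
    qed
  qed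
qed

lemma subset_partition_of_line_rel:
  assumes \<alpha>: "\<alpha> \<in> PIbar n" shows "\<alpha> \<subseteq> partition_of n (line_rel n \<alpha>)"
proof
  fix b assume b: "b \<in> \<alpha>"
  show "b \<in> partition_of n (line_rel n \<alpha>)"
  proof (cases "gen_line n b")
    case True
    let ?l = "{x. Inl x \<in> b}" and ?r = "{x. Inr x \<in> b}"
    have bl: "b = lineset ?l ?r" by (rule lineset_Inl_Inr)
    have "(?l, ?r) \<in> line_rel n \<alpha>" unfolding mem_line_rel_iff bl[symmetric] using b True by simp
    then show ?thesis using lineset_in_partition_of bl by metis
  next
    case False
    then obtain z where z: "b = {z}" using PIbar_block[OF \<alpha> b] by blast
    have "z \<in> Xs n \<union> Xs' n" using b z PIbar_Union[OF \<alpha>] by blast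
    moreover have "z \<notin> lineset A B" if AB: "(A, B) \<in> line_rel n \<alpha>" for A B
    proof
      assume z_in: "z \<in> lineset A B"
      have l: "lineset A B \<in> \<alpha>" "gen_line n (lineset A B)"
        using AB unfolding mem_line_rel_iff by simp_all
      then have "lineset A B \<noteq> b" using False by auto
      then show False using PIbar_disjoint[OF \<alpha> l(1) b] z_in z by auto
    qed
    ultimately show ?thesis using singleton_in_partition_of z by metis
  qed
qed

lemma partition_of_line_rel: "\<alpha> \<in> PIbar n \<Longrightarrow> partition_of n (line_rel n \<alpha>) = \<alpha>"
  using partition_of_line_rel_subset subset_partition_of_line_rel by (rule subset_antisym)

lemma gen_line_lineset_block_bij: "block_bij n R \<Longrightarrow> (A, B) \<in> R \<Longrightarrow> gen_line n (lineset A B)"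
  using block_bijD[of n R A B] by (simp add: gen_line_lineset Int_absorb2)

lemma line_rel_partition_of:
  assumes R: "block_bij n R" shows "line_rel n (partition_of n R) = R"
proof (rule set_eqI)
  fix p :: "nat set \<times> nat set"
  obtain A B where p: "p = (A, B)" by (cases p)
  have "(A, B) \<in> line_rel n (partition_of n R) \<longleftrightarrow> (A, B) \<in> R"
  proof
    assume "(A, B) \<in> line_rel n (partition_of n R)"
    then have l: "lineset A B \<in> partition_of n R" "gen_line n (lineset A B)"
      unfolding mem_line_rel_iff by simp_all
    from l(1) show "(A, B) \<in> R"
    proof (cases rule: partition_of_cases)
      case (line C D)
      then show ?thesis unfolding lineset_eq_iff by simp
    next
      case (point z)
      then show ?thesis using l(2) not_gen_line_singleton by metis
    qed
  next
    assume "(A, B) \<in> R"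
    then show "(A, B) \<in> line_rel n (partition_of n R)"
      unfolding mem_line_rel_iff
      using lineset_in_partition_of gen_line_lineset_block_bij[OF R] by blast
  qed
  then show "p \<in> line_rel n (partition_of n R) \<longleftrightarrow> p \<in> R" using p by simp
qed

lemma Union_partition_of:
  assumes R: "block_bij n R" shows "\<Union>(partition_of n R) = Xs n \<union> Xs' n"
proof
  show "\<Union>(partition_of n R) \<subseteq> Xs n \<union> Xs' n"
  proof
    fix z assume "z \<in> \<Union>(partition_of n R)"
    then obtain b where b: "b \<in> partition_of n R" "z \<in> b" by blast
    from b(1) show "z \<in> Xs n \<union> Xs' n"
    proof (cases rule: partition_of_cases)
      case (line A B)
      then have "lineset A B \<subseteq> Xs n \<union> Xs' n"
        using block_bijD[OF R line(1)] lineset_subset_iff by blast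
      then show ?thesis using b(2) line by blast
    qed (use b(2) in simp)
  qed
  show "Xs n \<union> Xs' n \<subseteq> \<Union>(partition_of n R)"
  proof
    fix z assume z: "z \<in> Xs n \<union> Xs' n"
    show "z \<in> \<Union>(partition_of n R)"
    proof (cases "\<exists>A B. (A, B) \<in> R \<and> z \<in> lineset A B")
      case True
      then show ?thesis using lineset_in_partition_of by blast
    next
      case False
      then show ?thesis using singleton_in_partition_of[OF z] by blast
    qed
  qed
qed

lemma partition_of_disjoint:
  assumes R: "block_bij n R" and b: "b \<in> partition_of n R" and c: "c \<in> partition_of n R"
    and "b \<noteq> c"
  shows "b \<inter> c = {}"
  using b
proof (cases rule: partition_of_cases)
  case (line A B)
  from c show ?thesis
  proof (cases rule: partition_of_cases)
    case (line A' B')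
    then have "(A, B) \<noteq> (A', B')" using \<open>b \<noteq> c\<close> \<open>b = lineset A B\<close> by auto
    then have "A \<inter> A' = {} \<and> B \<inter> B' = {}"
      using block_bij_disjoint[OF R \<open>(A, B) \<in> R\<close> line(1)] by simp
    then show ?thesis using \<open>b = lineset A B\<close> line(2) lineset_Int lineset_empty by simp
  next
    case (point z)
    then show ?thesis using \<open>b = lineset A B\<close> \<open>(A, B) \<in> R\<close> by blast
  qed
next
  case (point z)
  from c show ?thesis
  proof (cases rule: partition_of_cases)
    case (line A' B')
    then show ?thesis using point by blast
  qed (use point \<open>b \<noteq> c\<close> in blast)
qed

lemma partition_of_in_PIbar:
  assumes R: "block_bij n R" shows "partition_of n R \<in> PIbar n"
proof -
  have "b \<noteq> {}" if "b \<in> partition_of n R" for b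
    using that by (cases rule: partition_of_cases) (use block_bijD[OF R] lineset_ne in auto)
  moreover have "(\<exists>z. b = {z}) \<or> gen_line n b" if "b \<in> partition_of n R" for b
    using that by (cases rule: partition_of_cases) (use gen_line_lineset_block_bij[OF R] in auto)
  ultimately show ?thesis
    unfolding PIbar_def is_partition_of_def
    using Union_partition_of[OF R] partition_of_disjoint[OF R] by blast
qed

lemma prod_lines_eq: "prod_lines n \<alpha> \<beta> = (\<lambda>(A, B). lineset A B) ` (line_rel n \<alpha> O line_rel n \<beta>)"
proof (rule set_eqI, rule iffI)
  fix b assume "b \<in> prod_lines n \<alpha> \<beta>"
  then obtain A B D
    where "b = lineset A D" "lineset A B \<in> lines_of n \<alpha>" "lineset B D \<in> lines_of n \<beta>"
    unfolding prod_lines_def by blast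
  then have "(A, D) \<in> line_rel n \<alpha> O line_rel n \<beta>" "b = (\<lambda>(A, B). lineset A B) (A, D)"
    unfolding line_rel_def by auto
  then show "b \<in> (\<lambda>(A, B). lineset A B) ` (line_rel n \<alpha> O line_rel n \<beta>)" by blast
next
  fix b assume "b \<in> (\<lambda>(A, B). lineset A B) ` (line_rel n \<alpha> O line_rel n \<beta>)"
  then obtain p where p: "p \<in> line_rel n \<alpha> O line_rel n \<beta>" "b = (\<lambda>(A, B). lineset A B) p" by blast
  obtain A D where "p = (A, D)" by (cases p)
  then obtain B where "lineset A B \<in> lines_of n \<alpha>" "lineset B D \<in> lines_of n \<beta>" "b = lineset A D"
    using p unfolding line_rel_def by auto
  then show "b \<in> prod_lines n \<alpha> \<beta>" unfolding prod_lines_def by blast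
qed

lemma pmult_eq_partition_of: "pmult n \<alpha> \<beta> = partition_of n (line_rel n \<alpha> O line_rel n \<beta>)"
  unfolding pmult_def partition_of_def prod_lines_eq ..

lemma line_rel_pmult:
  "\<alpha> \<in> PIbar n \<Longrightarrow> \<beta> \<in> PIbar n \<Longrightarrow> line_rel n (pmult n \<alpha> \<beta>) = line_rel n \<alpha> O line_rel n \<beta>"
  unfolding pmult_eq_partition_of
  using line_rel_partition_of block_bij_relcomp block_bij_line_rel by blast

lemma pmult_in_PIbar: "\<alpha> \<in> PIbar n \<Longrightarrow> \<beta> \<in> PIbar n \<Longrightarrow> pmult n \<alpha> \<beta> \<in> PIbar n"
  unfolding pmult_eq_partition_of
  using partition_of_in_PIbar block_bij_relcomp block_bij_line_rel by blast

lemma inj_on_line_rel: "inj_on (line_rel n) (PIbar n)"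
  by (rule inj_onI) (metis partition_of_line_rel)

lemma ppow_in_PIbar: "\<alpha> \<in> PIbar n \<Longrightarrow> ppow n \<alpha> k \<in> PIbar n"
  by (induction k) (simp_all add: pmult_in_PIbar)

lemma line_rel_ppow: "\<alpha> \<in> PIbar n \<Longrightarrow> line_rel n (ppow n \<alpha> k) = line_rel n \<alpha> ^^ Suc k"
  by (induction k) (simp_all add: line_rel_pmult ppow_in_PIbar)

lemma line_rel_image_PIbar: "line_rel n ` PIbar n = {R. block_bij n R}"
proof
  show "line_rel n ` PIbar n \<subseteq> {R. block_bij n R}" using block_bij_line_rel by blast
  show "{R. block_bij n R} \<subseteq> line_rel n ` PIbar n"
    using line_rel_partition_of partition_of_in_PIbar by (metis image_eqI mem_Collect_eq subsetI)
qed

lemma idempotent_iff_line_rel: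
  "idempotent n e \<longleftrightarrow> e \<in> PIbar n \<and> line_rel n e O line_rel n e = line_rel n e"
  unfolding idempotent_def
  using line_rel_pmult pmult_in_PIbar inj_on_line_rel by (metis inj_onD)

lemma corank_eq_card_uncovered:
  assumes e: "e \<in> PIbar n" shows "corank n e = card (uncovered n (Domain (line_rel n e)))"
proof -
  let ?R = "line_rel n e"
  have R: "block_bij n ?R" using block_bij_line_rel[OF e] .
  have "{Inl x} \<in> partition_of n ?R \<longleftrightarrow> x \<in> uncovered n (Domain ?R)" if x: "x \<in> {1..n}" for x
  proof
    assume "{Inl x} \<in> partition_of n ?R"
    then show "x \<in> uncovered n (Domain ?R)"
    proof (cases rule: partition_of_cases)
      case (line A B)
      then obtain y where "y \<in> B" using block_bijD[OF R line(1)] by blast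
      then show ?thesis using line(2) by (metis lineset_simps(2) singletonD sum.distinct(2))
    next
      case (point z)
      then show ?thesis using x unfolding uncovered_def by fastforce
    qed
  next
    assume "x \<in> uncovered n (Domain ?R)"
    then show "{Inl x} \<in> partition_of n ?R"
      using x by (intro singleton_in_partition_of) (auto simp: uncovered_def)
  qed
  then have "{x\<in>{1..n}. {Inl x} \<in> e} = uncovered n (Domain ?R)"
    using partition_of_line_rel[OF e] unfolding uncovered_def by auto
  then show ?thesis unfolding corank_def by simp
qed

section \<open>Units, H-classes and the classification in PIbar\<close>

definition perm_rel :: "nat \<Rightarrow> (nat \<Rightarrow> nat) \<Rightarrow> (nat set \<times> nat set) set" where
  "perm_rel n \<pi> = (\<lambda>x. ({x}, {\<pi> x})) ` {1..n}"

lemma partition_of_perm_rel: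
  assumes \<pi>: "bij_betw \<pi> {1..n} {1..n}"
  shows "partition_of n (perm_rel n \<pi>) = {{Inl x, Inr (\<pi> x)} | x. x \<in> {1..n}}"
proof -
  have covered: "\<exists>A B. (A, B) \<in> perm_rel n \<pi> \<and> z \<in> lineset A B" if z: "z \<in> Xs n \<union> Xs' n" for z
  proof (cases z)
    case (Inl x)
    then have "({x}, {\<pi> x}) \<in> perm_rel n \<pi>" using z unfolding perm_rel_def by auto
    then show ?thesis using Inl by fastforce
  next
    case (Inr y)
    then have "y \<in> \<pi> ` {1..n}" using z \<pi> unfolding bij_betw_def by simp
    then obtain x where "x \<in> {1..n}" "y = \<pi> x" by blast
    then have "({x}, {\<pi> x}) \<in> perm_rel n \<pi>" unfolding perm_rel_def by blast
    then show ?thesis using Inr \<open>y = \<pi> x\<close> by fastforce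
  qed
  have "partition_of n (perm_rel n \<pi>) = (\<lambda>(A, B). lineset A B) ` perm_rel n \<pi>"
    unfolding partition_of_def using covered by fastforce
  also have "\<dots> = (\<lambda>x. {Inl x, Inr (\<pi> x)}) ` {1..n}"
    unfolding perm_rel_def image_image by (auto simp: lineset_def)
  finally show ?thesis by blast
qed

lemma perm_rel_in_block_group:
  assumes \<pi>: "bij_betw \<pi> {1..n} {1..n}" shows "perm_rel n \<pi> \<in> block_group n (singletons n)"
proof -
  have surj: "\<pi> ` {1..n} = {1..n}" and inj: "inj_on \<pi> {1..n}"
    using \<pi> unfolding bij_betw_def by simp_all
  have "block_bij n (perm_rel n \<pi>)"
  proof (rule block_bijI)
    fix A B assume "(A, B) \<in> perm_rel n \<pi>"
    then obtain x where "x \<in> {1..n}" "A = {x}" "B = {\<pi> x}" unfolding perm_rel_def by blast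
    then show "A \<noteq> {} \<and> B \<noteq> {} \<and> A \<subseteq> {1..n} \<and> B \<subseteq> {1..n}" using surj by auto
  next
    fix A B A' B' assume "(A, B) \<in> perm_rel n \<pi>" "(A', B') \<in> perm_rel n \<pi>" "(A, B) \<noteq> (A', B')"
    then obtain x x' where x: "x \<in> {1..n}" "x' \<in> {1..n}" "x \<noteq> x'"
      and "A = {x}" "B = {\<pi> x}" "A' = {x'}" "B' = {\<pi> x'}"
      unfolding perm_rel_def by blast
    moreover have "\<pi> x \<noteq> \<pi> x'" using inj x by (simp add: inj_on_eq_iff)
    ultimately show "A \<inter> A' = {} \<and> B \<inter> B' = {}" by simp
  qed
  moreover have "Domain (perm_rel n \<pi>) = singletons n"
    unfolding perm_rel_def singletons_def by force
  moreover have "Range (perm_rel n \<pi>) = (\<lambda>y. {y}) ` (\<pi> ` {1..n})"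
    unfolding perm_rel_def by force
  ultimately show ?thesis unfolding block_group_def singletons_def surj by simp
qed

lemma block_group_singletons_eq_perm_rel:
  assumes R: "R \<in> block_group n (singletons n)"
  obtains \<pi> where "bij_betw \<pi> {1..n} {1..n}" "R = perm_rel n \<pi>"
proof -
  have bij: "block_bij n R" and D: "Domain R = singletons n" and Rg: "Range R = singletons n"
    using R unfolding block_group_def by simp_all
  define \<pi> where "\<pi> x = (SOME y. ({x}, {y}) \<in> R)" for x
  have \<pi>R: "({x}, {\<pi> x}) \<in> R" if x: "x \<in> {1..n}" for x
  proof -
    obtain B where B: "({x}, B) \<in> R" using D x unfolding singletons_def by blast
    then have "B \<in> singletons n" using Rg by blast
    then have "\<exists>y. ({x}, {y}) \<in> R" using B unfolding singletons_def by blast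
    then show ?thesis unfolding \<pi>_def by (rule someI_ex)
  qed
  have "R \<subseteq> perm_rel n \<pi>"
  proof
    fix p assume p: "p \<in> R"
    obtain A B where AB: "p = (A, B)" by (cases p)
    then have "A \<in> singletons n" using p D by blast
    then obtain x where x: "x \<in> {1..n}" "A = {x}" unfolding singletons_def by blast
    have "B = {\<pi> x}" using block_bij_right_unique[OF bij _ \<pi>R[OF x(1)]] p AB x(2) by simp
    then show "p \<in> perm_rel n \<pi>" using AB x unfolding perm_rel_def by blast
  qed
  moreover have "perm_rel n \<pi> \<subseteq> R" using \<pi>R unfolding perm_rel_def by blast
  moreover have "\<pi> ` {1..n} \<subseteq> {1..n}"
  proof
    fix y assume "y \<in> \<pi> ` {1..n}"
    then obtain x where "x \<in> {1..n}" "y = \<pi> x" by blast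
    then have "{y} \<in> Range R" using \<pi>R by blast
    then show "y \<in> {1..n}" using Rg unfolding singletons_def by auto
  qed
  moreover have "inj_on \<pi> {1..n}"
  proof (rule inj_onI)
    fix x x' assume "x \<in> {1..n}" "x' \<in> {1..n}" "\<pi> x = \<pi> x'"
    then have "{x} = {x'}" using block_bij_left_unique[OF bij \<pi>R] \<pi>R by metis
    then show "x = x'" by simp
  qed
  ultimately show ?thesis
    using that endo_inj_surj[of "{1..n}" \<pi>] unfolding bij_betw_def by auto
qed

lemma Sym_n_eq_image_partition_of: "Sym_n n = partition_of n ` block_group n (singletons n)"
proof
  show "Sym_n n \<subseteq> partition_of n ` block_group n (singletons n)"
    unfolding Sym_n_def using partition_of_perm_rel perm_rel_in_block_group by fastforce
  show "partition_of n ` block_group n (singletons n) \<subseteq> Sym_n n"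
  proof
    fix \<alpha> assume "\<alpha> \<in> partition_of n ` block_group n (singletons n)"
    then obtain R where "R \<in> block_group n (singletons n)" "\<alpha> = partition_of n R" by blast
    then show "\<alpha> \<in> Sym_n n"
      unfolding Sym_n_def using partition_of_perm_rel
      by (metis (mono_tags, lifting) block_group_singletons_eq_perm_rel mem_Collect_eq)
  qed
qed

lemma Sym_n_subset_PIbar: "Sym_n n \<subseteq> PIbar n"
  unfolding Sym_n_eq_image_partition_of using partition_of_in_PIbar block_group_block_bij by blast

lemma line_rel_image_Sym_n: "line_rel n ` Sym_n n = block_group n (singletons n)"
  unfolding Sym_n_eq_image_partition_of image_image
  using line_rel_partition_of block_group_block_bij by (simp cong: image_cong)

lemma Domain_line_rel_greenR:
  assumes "a \<in> PIbar n" "e \<in> PIbar n" "greenR n a e"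
  shows "Domain (line_rel n a) = Domain (line_rel n e)"
proof -
  have "Domain (line_rel n (pmult n \<alpha> \<beta>)) \<subseteq> Domain (line_rel n \<alpha>)"
    if "\<alpha> \<in> PIbar n" "\<beta> \<in> PIbar n" for \<alpha> \<beta>
    using line_rel_pmult[OF that] by blast
  then show ?thesis using assms unfolding greenR_def by (metis subset_antisym)
qed

lemma Range_line_rel_greenL:
  assumes "a \<in> PIbar n" "e \<in> PIbar n" "greenL n a e"
  shows "Range (line_rel n a) = Range (line_rel n e)"
proof -
  have "Range (line_rel n (pmult n \<alpha> \<beta>)) \<subseteq> Range (line_rel n \<beta>)"
    if "\<alpha> \<in> PIbar n" "\<beta> \<in> PIbar n" for \<alpha> \<beta>
    using line_rel_pmult[OF that] by blast
  then show ?thesis using assms unfolding greenL_def by (metis subset_antisym)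
qed

text \<open>For an idempotent \<open>e\<close> with \<open>line_rel n e = Id_on F\<close>, the elements \<open>R\<close> and \<open>R\<inverse>\<close> of the
  group of \<open>Id_on F\<close> witness Green's relations: \<open>R = Id_on F O R\<close>, \<open>Id_on F = R O R\<inverse>\<close>, and dually.\<close>

lemma partition_of_in_Hclass:
  assumes e: "e \<in> PIbar n" and Le: "line_rel n e = Id_on F" and R: "R \<in> block_group n F"
  shows "partition_of n R \<in> Hclass n e"
proof -
  have bij: "block_bij n R" and D: "Domain R = F" and Rg: "Range R = F"
    using R unfolding block_group_def by simp_all
  let ?a = "partition_of n R" and ?b = "partition_of n (R\<inverse>)"
  have a: "?a \<in> PIbar n" "line_rel n ?a = R"
    using partition_of_in_PIbar[OF bij] line_rel_partition_of[OF bij] by simp_all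
  have b: "?b \<in> PIbar n" "line_rel n ?b = R\<inverse>"
    using partition_of_in_PIbar line_rel_partition_of block_bij_converse[OF bij] by simp_all
  have eq: "x = y" if "x \<in> PIbar n" "y \<in> PIbar n" "line_rel n x = line_rel n y" for x y
    by (rule inj_onD[OF inj_on_line_rel that(3,1,2)])
  have "?a = pmult n e ?a"
    by (rule eq) (simp_all add: a e pmult_in_PIbar line_rel_pmult Le D Id_on_relcomp)
  moreover have "?a = pmult n ?a e"
    by (rule eq) (simp_all add: a e pmult_in_PIbar line_rel_pmult Le Rg relcomp_Id_on)
  moreover have "e = pmult n ?a ?b"
    by (rule eq)
      (simp_all add: a b e pmult_in_PIbar line_rel_pmult Le D block_bij_relcomp_converse[OF bij])
  moreover have "e = pmult n ?b ?a"
    by (rule eq)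
      (simp_all add: a b e pmult_in_PIbar line_rel_pmult Le Rg block_bij_converse_relcomp[OF bij])
  ultimately show ?thesis
    unfolding Hclass_def greenR_def greenL_def using a(1) b(1) e by blast
qed

lemma line_rel_image_Hclass:
  assumes e: "e \<in> PIbar n" and Le: "line_rel n e = Id_on F"
  shows "line_rel n ` Hclass n e = block_group n F"
proof
  show "line_rel n ` Hclass n e \<subseteq> block_group n F"
  proof
    fix R assume "R \<in> line_rel n ` Hclass n e"
    then obtain a where a: "a \<in> Hclass n e" "R = line_rel n a" by blast
    then have "a \<in> PIbar n" "greenR n a e" "greenL n a e" unfolding Hclass_def by simp_all
    then show "R \<in> block_group n F"
      using a(2) Domain_line_rel_greenR[OF _ e] Range_line_rel_greenL[OF _ e] Le
        block_bij_line_rel unfolding block_group_def by simp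
  qed
  show "block_group n F \<subseteq> line_rel n ` Hclass n e"
    using partition_of_in_Hclass[OF e Le] line_rel_partition_of block_group_block_bij
    by (metis image_eqI subsetI)
qed

lemma Hclass_subset_PIbar: "Hclass n e \<subseteq> PIbar n"
  unfolding Hclass_def by blast

lemma line_rel_image_nonunits:
  "line_rel n ` (PIbar n - Sym_n n) = {R. block_bij n R} - block_group n (singletons n)"
  using inj_on_image_set_diff[OF inj_on_line_rel Diff_subset Sym_n_subset_PIbar]
  by (simp add: line_rel_image_PIbar line_rel_image_Sym_n)

lemma mem_iff_line_rel_mem_image:
  "T \<subseteq> PIbar n \<Longrightarrow> \<alpha> \<in> PIbar n \<Longrightarrow> \<alpha> \<in> T \<longleftrightarrow> line_rel n \<alpha> \<in> line_rel n ` T"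
  using inj_on_image_mem_iff[OF inj_on_line_rel] by blast

lemma subsemigroup_iff_block_subsemigroup:
  assumes T: "T \<subseteq> PIbar n"
  shows "subsemigroup n T \<longleftrightarrow> block_subsemigroup n (line_rel n ` T)"
proof -
  have "pmult n \<alpha> \<beta> \<in> T \<longleftrightarrow> line_rel n \<alpha> O line_rel n \<beta> \<in> line_rel n ` T"
    if "\<alpha> \<in> T" "\<beta> \<in> T" for \<alpha> \<beta>
    using that T mem_iff_line_rel_mem_image[OF T] pmult_in_PIbar line_rel_pmult
    by (simp add: subset_iff)
  then show ?thesis
    unfolding subsemigroup_def block_subsemigroup_def using T block_bij_line_rel by auto
qed

lemma isolated_iff_block_isolated:
  assumes T: "T \<subseteq> PIbar n"
  shows "isolated n T \<longleftrightarrow> block_isolated n (line_rel n ` T)"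
proof
  assume iso: "isolated n T"
  show "block_isolated n (line_rel n ` T)" unfolding block_isolated_def
  proof (intro allI impI)
    fix R k assume R: "block_bij n R" and "R ^^ Suc k \<in> line_rel n ` T"
    then have "line_rel n (ppow n (partition_of n R) k) \<in> line_rel n ` T"
      using line_rel_ppow partition_of_in_PIbar line_rel_partition_of by simp
    then have "ppow n (partition_of n R) k \<in> T"
      using mem_iff_line_rel_mem_image[OF T] ppow_in_PIbar partition_of_in_PIbar[OF R] by blast
    then have "partition_of n R \<in> T"
      using iso partition_of_in_PIbar[OF R] unfolding isolated_def by blast
    then show "R \<in> line_rel n ` T" using line_rel_partition_of[OF R] by force
  qed
next
  assume iso: "block_isolated n (line_rel n ` T)"
  show "isolated n T" unfolding isolated_def
  proof (intro ballI allI impI)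
    fix \<alpha> k assume \<alpha>: "\<alpha> \<in> PIbar n" and "ppow n \<alpha> k \<in> T"
    then have "line_rel n \<alpha> ^^ Suc k \<in> line_rel n ` T" using line_rel_ppow[OF \<alpha>] by force
    then have "line_rel n \<alpha> \<in> line_rel n ` T"
      using iso block_bij_line_rel[OF \<alpha>] unfolding block_isolated_def by blast
    then show "\<alpha> \<in> T" using mem_iff_line_rel_mem_image[OF T \<alpha>] by simp
  qed
qed

lemma ex_Hclass_iff:
  assumes T: "T \<subseteq> PIbar n"
  shows "(\<exists>e. idempotent n e \<and> corank n e \<le> 1 \<and> T = Hclass n e) \<longleftrightarrow>
    (\<exists>F. block_family n F \<and> card (uncovered n F) \<le> 1 \<and> line_rel n ` T = block_group n F)"
proof
  assume "\<exists>e. idempotent n e \<and> corank n e \<le> 1 \<and> T = Hclass n e"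
  then obtain e where e: "idempotent n e" "corank n e \<le> 1" "T = Hclass n e" by blast
  have eP: "e \<in> PIbar n" and idem: "line_rel n e O line_rel n e = line_rel n e"
    using e(1) idempotent_iff_line_rel by simp_all
  define F where "F = Domain (line_rel n e)"
  have "line_rel n e = Id_on F"
    using block_bij_idempotent[OF block_bij_line_rel[OF eP] idem] unfolding F_def .
  then show "\<exists>F. block_family n F \<and> card (uncovered n F) \<le> 1 \<and> line_rel n ` T = block_group n F"
    using line_rel_image_Hclass[OF eP] e(2,3) corank_eq_card_uncovered[OF eP]
      block_family_Domain[OF block_bij_line_rel[OF eP]]
    unfolding F_def by auto
next
  assume "\<exists>F. block_family n F \<and> card (uncovered n F) \<le> 1 \<and> line_rel n ` T = block_group n F"
  then obtain F where F: "block_family n F" "card (uncovered n F) \<le> 1"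
    and TF: "line_rel n ` T = block_group n F" by blast
  define e where "e = partition_of n (Id_on F)"
  have bij: "block_bij n (Id_on F)" using F(1) block_bij_Id_on_iff by blast
  have eP: "e \<in> PIbar n" and Le: "line_rel n e = Id_on F"
    using partition_of_in_PIbar[OF bij] line_rel_partition_of[OF bij] unfolding e_def by simp_all
  have "idempotent n e" using idempotent_iff_line_rel eP Le Id_on_relcomp_Id_on[of F F] by simp
  moreover have "corank n e \<le> 1" using corank_eq_card_uncovered[OF eP] Le F(2) by simp
  moreover have "line_rel n ` T = line_rel n ` Hclass n e"
    using TF line_rel_image_Hclass[OF eP Le] by simp
  then have "T = Hclass n e"
    using inj_on_image_eq_iff[OF inj_on_line_rel T Hclass_subset_PIbar] by simp
  ultimately show "\<exists>e. idempotent n e \<and> corank n e \<le> 1 \<and> T = Hclass n e" by blast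
qed

theorem mainTheorem13:
  fixes n :: nat and T :: "(nat + nat) set set set"
  assumes "n \<ge> 2"
  shows "(subsemigroup n T \<and> isolated n T) \<longleftrightarrow>
         (T = PIbar n \<or> T = Sym_n n \<or> T = PIbar n - Sym_n n \<or>
          (\<exists>e. idempotent n e \<and> corank n e \<le> 1 \<and> T = Hclass n e))"
proof (cases "T \<subseteq> PIbar n")
  case False
  then show ?thesis
    unfolding subsemigroup_def using Sym_n_subset_PIbar Hclass_subset_PIbar by blast
next
  case True
  have image_eq_iff: "line_rel n ` T = line_rel n ` X \<longleftrightarrow> T = X" if "X \<subseteq> PIbar n" for X
    using inj_on_image_eq_iff[OF inj_on_line_rel True that] .
  have "subsemigroup n T \<and> isolated n T \<longleftrightarrow>
      block_subsemigroup n (line_rel n ` T) \<and> block_isolated n (line_rel n ` T)"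
    using subsemigroup_iff_block_subsemigroup[OF True] isolated_iff_block_isolated[OF True] by simp
  also have "\<dots> \<longleftrightarrow> line_rel n ` T = line_rel n ` PIbar n \<or> line_rel n ` T = line_rel n ` Sym_n n \<or>
      line_rel n ` T = line_rel n ` (PIbar n - Sym_n n) \<or>
      (\<exists>F. block_family n F \<and> card (uncovered n F) \<le> 1 \<and> line_rel n ` T = block_group n F)"
    unfolding isolated_block_subsemigroup_iff[OF assms] line_rel_image_PIbar line_rel_image_Sym_n
      line_rel_image_nonunits ..
  also have "\<dots> \<longleftrightarrow> T = PIbar n \<or> T = Sym_n n \<or> T = PIbar n - Sym_n n \<or>
      (\<exists>e. idempotent n e \<and> corank n e \<le> 1 \<and> T = Hclass n e)"
    using image_eq_iff Sym_n_subset_PIbar ex_Hclass_iff[OF True] by auto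
  finally show ?thesis .
qed

end
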